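(* Let $X$ be a regular space. Then $L(X)\leq t(Q_{P}(X))$.
   Context: A function $f\colon X\to Y$ between topological spaces is quasi-continuous at $x\in X$ if for every open $U\ni x$ and every open $V\ni f(x)$ there is a non-empty open $G\subseteq U$ with $f(G)\subseteq V$; $f$ is quasi-continuous if it is so at every point. $Q_{P}(X)$ is the set of quasi-continuous functions $X\to\mathbb{R}$ with the topology of point-wise convergence (subspace topology from $\mathbb{R}^X$). The Lindelöf degree is $L(X)=\aleph_0+\min\{\eta : \text{every open cover of } X \text{ has a subcover of cardinality}\le\eta\}$. The tightness of a space $Z$ is $t(Z)=\sup_{z\in Z} t(z,Z)$, where $t(z,Z)=\aleph_0+\sup\{a(z,A): A\subseteq Z,\ z\in\overline{A}\}$ and $a(z,A)=\min\{|B|: B\subseteq A,\ z\in\overline{B}\}$. *)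

theory Defs
  imports "HOL-Analysis.Analysis" "HOL-Library.Equipollence"
begin

definition quasi_continuous_at :: "'a topology \<Rightarrow> ('a \<Rightarrow> real) \<Rightarrow> 'a \<Rightarrow> bool" where
  "quasi_continuous_at X f x \<longleftrightarrow>
     (\<forall>U V. openin X U \<longrightarrow> x \<in> U \<longrightarrow> open V \<longrightarrow> f x \<in> V \<longrightarrow>
        (\<exists>G. openin X G \<and> G \<noteq> {} \<and> G \<subseteq> U \<and> f ` G \<subseteq> V))"

definition quasi_continuous :: "'a topology \<Rightarrow> ('a \<Rightarrow> real) \<Rightarrow> bool" where
  "quasi_continuous X f \<longleftrightarrow> (\<forall>x\<in>topspace X. quasi_continuous_at X f x)"

text \<open>Q_P(X): quasi-continuous real functions on X (represented extensionally on topspace X)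
  with the topology of pointwise convergence (subspace of the product topology).\<close>
definition QP :: "'a topology \<Rightarrow> ('a \<Rightarrow> real) topology" where
  "QP X = subtopology (powertop_real (topspace X))
            {f \<in> extensional (topspace X). quasi_continuous X f}"

text \<open>L(X) \<le> |K|  (L(X) includes the summand aleph_0).\<close>
definition lindelof_degree_le :: "'a topology \<Rightarrow> 'k set \<Rightarrow> bool" where
  "lindelof_degree_le X K \<longleftrightarrow> infinite K \<and>
     (\<forall>\<U>. (\<forall>U\<in>\<U>. openin X U) \<longrightarrow> topspace X \<subseteq> \<Union>\<U> \<longrightarrow>
        (\<exists>\<V>. \<V> \<subseteq> \<U> \<and> topspace X \<subseteq> \<Union>\<V> \<and> \<V> \<lesssim> K))"

text \<open>t(Z) \<le> |K|  (t(Z) includes the summand aleph_0).\<close>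
definition tightness_le :: "'b topology \<Rightarrow> 'k set \<Rightarrow> bool" where
  "tightness_le Z K \<longleftrightarrow> infinite K \<and>
     (\<forall>z A. A \<subseteq> topspace Z \<longrightarrow> z \<in> Z closure_of A \<longrightarrow>
        (\<exists>B. B \<subseteq> A \<and> z \<in> Z closure_of B \<and> B \<lesssim> K))"

end

theory Submission
  imports Defs
begin

text \<open>Let \<open>\<U>\<close> be an open cover of the regular space X, and let \<open>\<V>\<close> consist of the open sets
  whose closure lies in some member of \<open>\<U>\<close>; by regularity \<open>\<V>\<close> covers X. The characteristic
  function of the closure of an open set is quasi-continuous, and those of closures of finite
  unions of members of \<open>\<V>\<close> accumulate, pointwise, at the constant function 1. Tightness picks
  at most t(Q_P(X)) of them still accumulating at 1. Every point has a value close to 1 under one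
  of these, so the closures of the finitely many members of \<open>\<V>\<close> behind each chosen function
  cover X, and the members of \<open>\<U>\<close> containing these closures form the required subcover.\<close>

lemma Union_finite_lepoll_infinite:
  assumes "\<C> \<lesssim> K" "infinite K" "\<And>C. C \<in> \<C> \<Longrightarrow> finite C"
  shows "\<Union>\<C> \<lesssim> K"
proof -
  have "ordLeq3 (card_of C) (card_of K)" if "C \<in> \<C>" for C
    using finite_lepoll_infinite[OF assms(2) assms(3)[OF that]]
    by (simp add: lepoll_def card_of_ordLeq[symmetric])
  moreover have "ordLeq3 (card_of \<C>) (card_of K)"
    using assms(1) by (simp add: lepoll_def card_of_ordLeq[symmetric])
  ultimately have "ordLeq3 (card_of (\<Union>C\<in>\<C>. C)) (card_of K)"
    using card_of_UNION_ordLeq_infinite[OF assms(2), of \<C> id] by simp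
  then show ?thesis
    by (simp add: lepoll_def card_of_ordLeq[symmetric])
qed

lemma quasi_continuous_const: "quasi_continuous X (restrict (\<lambda>x. c) (topspace X))"
  unfolding quasi_continuous_def quasi_continuous_at_def
  using openin_subset by fastforce

definition closure_indicator :: "'a topology \<Rightarrow> 'a set \<Rightarrow> 'a \<Rightarrow> real" where
  "closure_indicator X W = restrict (indicator (X closure_of W)) (topspace X)"

lemma quasi_continuous_closure_indicator:
  assumes "openin X W"
  shows "quasi_continuous X (closure_indicator X W)"
  unfolding quasi_continuous_def quasi_continuous_at_def
proof (intro ballI allI impI)
  fix x U V
  assume x: "x \<in> topspace X" and U: "openin X U" "x \<in> U" and "open V"
    and fx: "closure_indicator X W x \<in> V"
  show "\<exists>G. openin X G \<and> G \<noteq> {} \<and> G \<subseteq> U \<and> closure_indicator X W ` G \<subseteq> V"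
  proof (cases "x \<in> X closure_of W")
    case True
    then obtain y where "y \<in> W" "y \<in> U"
      using U in_closure_of by metis
    moreover have "W \<subseteq> X closure_of W"
      by (simp add: assms closure_of_subset openin_subset)
    ultimately show ?thesis
      using U fx True x openin_subset[OF assms]
      by (intro exI[of _ "U \<inter> W"]) (auto simp: assms closure_indicator_def)
  next
    case False
    then show ?thesis
      using U fx x openin_subset[OF U(1)]
      by (intro exI[of _ "U - X closure_of W"]) (auto simp: closure_indicator_def)
  qed
qed

lemma topspace_QP: "topspace (QP X) = {f \<in> extensional (topspace X). quasi_continuous X f}"
  by (auto simp: QP_def PiE_iff extensional_def)

lemma closure_indicator_in_topspace_QP:
  "openin X W \<Longrightarrow> closure_indicator X W \<in> topspace (QP X)"
  using quasi_continuous_closure_indicator[of X W] by (simp add: topspace_QP closure_indicator_def)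

lemma continuous_map_QP_eval:
  "x \<in> topspace X \<Longrightarrow> continuous_map (QP X) euclideanreal (\<lambda>f. f x)"
  unfolding QP_def
  by (intro continuous_map_from_subtopology continuous_map_product_projection)

text \<open>Pointwise convergence: a basic neighbourhood constrains only finitely many coordinates.\<close>
lemma in_closure_of_QP_if_agree_on_finite:
  assumes z: "z \<in> topspace (QP X)" and A: "A \<subseteq> topspace (QP X)"
    and agree: "\<And>F. finite F \<Longrightarrow> F \<subseteq> topspace X \<Longrightarrow> \<exists>f\<in>A. \<forall>x\<in>F. f x = z x"
  shows "z \<in> QP X closure_of A"
  unfolding in_closure_of
proof (intro conjI z allI impI)
  fix N
  assume N: "z \<in> N \<and> openin (QP X) N"
  then obtain P where P: "openin (powertop_real (topspace X)) P"
    and N_eq: "N = P \<inter> {f \<in> extensional (topspace X). quasi_continuous X f}"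
    unfolding QP_def openin_subtopology by blast
  obtain W where W: "finite {i \<in> topspace X. W i \<noteq> UNIV}"
    "z \<in> Pi\<^sub>E (topspace X) W" "Pi\<^sub>E (topspace X) W \<subseteq> P"
    using P N N_eq unfolding openin_product_topology_alt by fastforce
  obtain f where f: "f \<in> A" "\<forall>x\<in>{i \<in> topspace X. W i \<noteq> UNIV}. f x = z x"
    using agree[OF W(1)] by blast
  have "f \<in> topspace (QP X)"
    using A f(1) by blast
  then have "f \<in> Pi\<^sub>E (topspace X) W"
    using W(2) f(2) by (auto simp: topspace_QP PiE_iff)
  then show "\<exists>f. f \<in> A \<and> f \<in> N"
    using W(3) N_eq \<open>f \<in> topspace (QP X)\<close> f(1) by (auto simp: topspace_QP)
qed

lemma const_one_in_closure_of_closure_indicators: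
  assumes open_\<V>: "\<And>V. V \<in> \<V> \<Longrightarrow> openin X V" and cover: "topspace X \<subseteq> \<Union>\<V>"
  shows "restrict (\<lambda>x. 1) (topspace X) \<in>
           QP X closure_of ((\<lambda>\<S>. closure_indicator X (\<Union>\<S>)) ` {\<S>. finite \<S> \<and> \<S> \<subseteq> \<V>})"
proof (rule in_closure_of_QP_if_agree_on_finite)
  show "restrict (\<lambda>x. 1) (topspace X) \<in> topspace (QP X)"
    by (simp add: topspace_QP quasi_continuous_const)
  show "(\<lambda>\<S>. closure_indicator X (\<Union>\<S>)) ` {\<S>. finite \<S> \<and> \<S> \<subseteq> \<V>} \<subseteq> topspace (QP X)"
    using open_\<V> by (auto intro!: closure_indicator_in_topspace_QP)
next
  fix F
  assume F: "finite F" "F \<subseteq> topspace X"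
  then have "\<forall>x\<in>F. \<exists>V\<in>\<V>. x \<in> V"
    using cover by blast
  then obtain g where g: "\<And>x. x \<in> F \<Longrightarrow> g x \<in> \<V> \<and> x \<in> g x"
    by metis
  have "\<Union>(g ` F) \<subseteq> topspace X"
    using g open_\<V> openin_subset by blast
  then have "F \<subseteq> X closure_of \<Union>(g ` F)"
    using g closure_of_subset by fastforce
  moreover have "g ` F \<in> {\<S>. finite \<S> \<and> \<S> \<subseteq> \<V>}"
    using F(1) g by blast
  ultimately show "\<exists>f\<in>(\<lambda>\<S>. closure_indicator X (\<Union>\<S>)) ` {\<S>. finite \<S> \<and> \<S> \<subseteq> \<V>}.
                     \<forall>x\<in>F. f x = restrict (\<lambda>x. 1) (topspace X) x"
    using F(2) by (intro bexI[of _ "closure_indicator X (\<Union>(g ` F))"]) (auto simp: closure_indicator_def)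
qed

lemma closures_cover_if_const_one_in_closure_of_closure_indicators:
  assumes finite_\<C>: "\<And>\<S>. \<S> \<in> \<C> \<Longrightarrow> finite \<S>"
    and one: "restrict (\<lambda>x. 1) (topspace X) \<in> QP X closure_of ((\<lambda>\<S>. closure_indicator X (\<Union>\<S>)) ` \<C>)"
  shows "topspace X \<subseteq> (\<Union>V\<in>\<Union>\<C>. X closure_of V)"
proof
  fix x
  assume x: "x \<in> topspace X"
  define N where "N = {f \<in> topspace (QP X). f x \<in> {1/2<..}}"
  have "openin (QP X) N"
    unfolding N_def using continuous_map_QP_eval[OF x] by (rule openin_continuous_map_preimage) simp
  moreover have "restrict (\<lambda>x. 1) (topspace X) \<in> N"
    using one x by (auto simp: in_closure_of N_def)
  ultimately obtain f where "f \<in> (\<lambda>\<S>. closure_indicator X (\<Union>\<S>)) ` \<C>" "f \<in> N"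
    using one unfolding in_closure_of by blast
  then obtain \<S> where \<S>: "\<S> \<in> \<C>" "closure_indicator X (\<Union>\<S>) x > 1/2"
    by (auto simp: N_def)
  then have "x \<in> (\<Union>V\<in>\<S>. X closure_of V)"
    using x finite_\<C> closure_of_Union[of \<S> X]
    by (cases "x \<in> X closure_of \<Union>\<S>") (auto simp: closure_indicator_def)
  then show "x \<in> (\<Union>V\<in>\<Union>\<C>. X closure_of V)"
    using \<S>(1) by blast
qed

lemma tightness_QP_imp_small_closure_cover:
  assumes tight: "tightness_le (QP X) K"
    and open_\<V>: "\<And>V. V \<in> \<V> \<Longrightarrow> openin X V" and cover: "topspace X \<subseteq> \<Union>\<V>"
  shows "\<exists>\<W>\<subseteq>\<V>. \<W> \<lesssim> K \<and> topspace X \<subseteq> (\<Union>V\<in>\<W>. X closure_of V)"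
proof -
  define ind where "ind = (\<lambda>\<S>. closure_indicator X (\<Union>\<S>))"
  have "ind ` {\<S>. finite \<S> \<and> \<S> \<subseteq> \<V>} \<subseteq> topspace (QP X)"
    using open_\<V> unfolding ind_def by (auto intro!: closure_indicator_in_topspace_QP)
  then obtain B where B: "B \<subseteq> ind ` {\<S>. finite \<S> \<and> \<S> \<subseteq> \<V>}"
      "restrict (\<lambda>x. 1) (topspace X) \<in> QP X closure_of B" "B \<lesssim> K"
    using tight const_one_in_closure_of_closure_indicators[OF open_\<V> cover]
    unfolding tightness_le_def ind_def by blast
  from B(1) obtain \<C> where \<C>: "\<C> \<subseteq> {\<S>. finite \<S> \<and> \<S> \<subseteq> \<V>}" "inj_on ind \<C>" "B = ind ` \<C>"
    unfolding subset_image_inj by blast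
  have "\<C> \<lesssim> K"
    using B(3) \<C>(2,3) by simp
  then have "\<Union>\<C> \<lesssim> K"
    using \<C>(1) tight by (intro Union_finite_lepoll_infinite) (auto simp: tightness_le_def)
  moreover have "topspace X \<subseteq> (\<Union>V\<in>\<Union>\<C>. X closure_of V)"
  proof (rule closures_cover_if_const_one_in_closure_of_closure_indicators)
    show "\<And>\<S>. \<S> \<in> \<C> \<Longrightarrow> finite \<S>"
      using \<C>(1) by blast
    show "restrict (\<lambda>x. 1) (topspace X) \<in> QP X closure_of ((\<lambda>\<S>. closure_indicator X (\<Union>\<S>)) ` \<C>)"
      using B(2) unfolding \<C>(3) ind_def .
  qed
  moreover have "\<Union>\<C> \<subseteq> \<V>"
    using \<C>(1) by blast
  ultimately show ?thesis
    by blast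
qed

lemma regular_space_closure_of_refines_cover:
  assumes "regular_space X" "\<And>U. U \<in> \<U> \<Longrightarrow> openin X U" "topspace X \<subseteq> \<Union>\<U>"
  shows "topspace X \<subseteq> \<Union>{V. openin X V \<and> (\<exists>U\<in>\<U>. X closure_of V \<subseteq> U)}"
proof
  fix x
  assume "x \<in> topspace X"
  then obtain U where "U \<in> \<U>" "x \<in> U"
    using assms(3) by blast
  then obtain V C where "openin X V" "closedin X C" "x \<in> V" "V \<subseteq> C" "C \<subseteq> U"
    using assms(1,2) unfolding neighbourhood_base_of_closedin[symmetric] neighbourhood_base_of
    by metis
  then have "X closure_of V \<subseteq> U"
    by (meson closure_of_minimal order_trans)
  then show "x \<in> \<Union>{V. openin X V \<and> (\<exists>U\<in>\<U>. X closure_of V \<subseteq> U)}"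
    using \<open>openin X V\<close> \<open>x \<in> V\<close> \<open>U \<in> \<U>\<close> by blast
qed

lemma regular_space_small_subcover_if_small_closure_covers:
  assumes "regular_space X"
    and closure_covers: "\<And>\<V>. (\<And>V. V \<in> \<V> \<Longrightarrow> openin X V) \<Longrightarrow> topspace X \<subseteq> \<Union>\<V> \<Longrightarrow>
           \<exists>\<W>\<subseteq>\<V>. \<W> \<lesssim> K \<and> topspace X \<subseteq> (\<Union>V\<in>\<W>. X closure_of V)"
    and open_\<U>: "\<And>U. U \<in> \<U> \<Longrightarrow> openin X U" and cover: "topspace X \<subseteq> \<Union>\<U>"
  shows "\<exists>\<W>\<subseteq>\<U>. topspace X \<subseteq> \<Union>\<W> \<and> \<W> \<lesssim> K"
proof -
  define \<V> where "\<V> = {V. openin X V \<and> (\<exists>U\<in>\<U>. X closure_of V \<subseteq> U)}"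
  have open_\<V>: "\<And>V. V \<in> \<V> \<Longrightarrow> openin X V"
    by (simp add: \<V>_def)
  have cover_\<V>: "topspace X \<subseteq> \<Union>\<V>"
    unfolding \<V>_def using assms(1) open_\<U> cover by (rule regular_space_closure_of_refines_cover)
  obtain \<W> where \<W>: "\<W> \<subseteq> \<V>" "\<W> \<lesssim> K" "topspace X \<subseteq> (\<Union>V\<in>\<W>. X closure_of V)"
    using closure_covers[OF open_\<V> cover_\<V>] by blast
  have "\<forall>V\<in>\<V>. \<exists>U\<in>\<U>. X closure_of V \<subseteq> U"
    by (simp add: \<V>_def)
  then obtain u where u: "\<And>V. V \<in> \<V> \<Longrightarrow> u V \<in> \<U> \<and> X closure_of V \<subseteq> u V"
    by metis
  have "u ` \<W> \<lesssim> K"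
    using image_lepoll \<W>(2) by (rule lepoll_trans)
  moreover have "u ` \<W> \<subseteq> \<U>"
    using \<W>(1) u by blast
  moreover have "topspace X \<subseteq> \<Union>(u ` \<W>)"
  proof
    fix x
    assume "x \<in> topspace X"
    then obtain V where "V \<in> \<W>" "x \<in> X closure_of V"
      using \<W>(3) by blast
    then show "x \<in> \<Union>(u ` \<W>)"
      using \<W>(1) u by blast
  qed
  ultimately show ?thesis
    by blast
qed

theorem mainTheorem2:
  fixes X :: "'a topology" and K :: "'k set"
  assumes "regular_space X"
    and "tightness_le (QP X) K"
  shows "lindelof_degree_le X K"
  unfolding lindelof_degree_le_def
proof (intro conjI allI impI)
  show "infinite K"
    using assms(2) by (simp add: tightness_le_def)
  fix \<U>
  assume "\<forall>U\<in>\<U>. openin X U" and "topspace X \<subseteq> \<Union>\<U>"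
  then show "\<exists>\<W>\<subseteq>\<U>. topspace X \<subseteq> \<Union>\<W> \<and> \<W> \<lesssim> K"
    using regular_space_small_subcover_if_small_closure_covers[OF assms(1)
        tightness_QP_imp_small_closure_cover[OF assms(2)]]
    by blast
qed

end
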